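(* (i) Let $\mu$ be a measure and $f,g$ nonnegative elements of $\mathbb{L}_2(\mu)$ with $\|f\|=1$ and $\|g\|>0$, and let $\overline{g}=g/\|g\|$. Then \[ \|f-\overline{g}\|^2\le\frac{4\|f-g\|^2}{4-\|f-\overline{g}\|^2}\le2\|f-g\|^2. \] (ii) If $s$ is a probability density with respect to $\mu$, $g$ a nonnegative element of $\mathbb{L}_2(\mu)$ with $\|g\|>0$ and $u=(g/\|g\|)^2$, then $u$ is a probability density with respect to $\mu$ and \[ h^2(s,u)\le1-\sqrt{1-\left(\|\sqrt{s}-g\|^2\wedge1\right)}\le\|\sqrt{s}-g\|^2\wedge1. \] (iii) If $t\in\mathbb{L}_1(\mu)$ satisfies $\int(t\vee0)\,d\mu>0$ and $\pi(t)=(t\vee0)/\int(t\vee0)\,d\mu$, then \[ h^2(s,\pi(t))\le1-\sqrt{1-\left(\|\sqrt{s}-\sqrt{t\vee0}\|^2\wedge1\right)}\le\|\sqrt{s}-\sqrt{t\vee0}\|^2\wedge1. \]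
   Context: $\|\cdot\|$ is the $\mathbb{L}_2(\mu)$ norm. For probability densities $s,u$ with respect to $\mu$, $h^2(s,u)=\frac12\int(\sqrt{s}-\sqrt{u})^2\,d\mu$ is the squared Hellinger distance. *)

theory Defs
  imports "HOL-Analysis.Analysis"
begin

definition in_L2 :: "'a measure \<Rightarrow> ('a \<Rightarrow> real) \<Rightarrow> bool" where
  "in_L2 M f \<longleftrightarrow> f \<in> borel_measurable M \<and> integrable M (\<lambda>x. (f x)\<^sup>2)"

definition L2_norm :: "'a measure \<Rightarrow> ('a \<Rightarrow> real) \<Rightarrow> real" where
  "L2_norm M f = sqrt (\<integral>x. (f x)\<^sup>2 \<partial>M)"

definition prob_density :: "'a measure \<Rightarrow> ('a \<Rightarrow> real) \<Rightarrow> bool" where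
  "prob_density M s \<longleftrightarrow> s \<in> borel_measurable M \<and> (AE x in M. 0 \<le> s x)
      \<and> integrable M s \<and> (\<integral>x. s x \<partial>M) = 1"

definition hellinger2 :: "'a measure \<Rightarrow> ('a \<Rightarrow> real) \<Rightarrow> ('a \<Rightarrow> real) \<Rightarrow> real" where
  "hellinger2 M s u = (1/2) * (\<integral>x. (sqrt (s x) - sqrt (u x))\<^sup>2 \<partial>M)"

end

theory Submission
  imports Defs
begin

text \<open>
  Write \<open>N = \<parallel>g\<parallel>\<close> and \<open>c = \<langle>f, g\<rangle> / N\<close>, the cosine of the angle between \<open>f\<close> and \<open>g\<close>; it is
  nonnegative because both functions are. Expanding the squares gives
  \<open>\<parallel>f - g/N\<parallel>\<^sup>2 = 2 - 2c\<close> and the Pythagorean identity \<open>\<parallel>f - g\<parallel>\<^sup>2 = (1 - c\<^sup>2) + (N - c)\<^sup>2\<close>,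
  so \<open>\<parallel>f - g\<parallel>\<^sup>2 \<ge> 1 - c\<^sup>2\<close>: the ray through \<open>g\<close> stays at distance \<open>\<surd>(1 - c\<^sup>2)\<close> from \<open>f\<close>.
  Part (i) is this inequality rewritten in terms of \<open>\<parallel>f - g/N\<parallel>\<^sup>2\<close>. For (ii) take \<open>f = \<surd>s\<close>:
  then \<open>h\<^sup>2(s, u) = \<parallel>\<surd>s - g/N\<parallel>\<^sup>2 / 2 = 1 - c\<close>, and \<open>c \<ge> \<surd>(1 - \<parallel>\<surd>s - g\<parallel>\<^sup>2)\<close>.
  Part (iii) is (ii) for \<open>g = \<surd>(t \<or> 0)\<close>.
\<close>

lemma le_four_mult_divide_le_two_mult:
  fixes a b :: real
  assumes "0 \<le> a" "a \<le> 2" "a * (4 - a) \<le> 4 * b"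
  shows "a \<le> 4 * b / (4 - a)" and "4 * b / (4 - a) \<le> 2 * b"
proof -
  have pos: "4 - a > 0" using assms(2) by simp
  show "a \<le> 4 * b / (4 - a)" using assms(3) pos by (simp add: le_divide_eq)
  have "0 \<le> b" using assms mult_nonneg_nonneg[of a "4 - a"] by linarith
  then have "4 * b \<le> 2 * b * (4 - a)"
    using mult_left_mono[OF assms(2), of b] by (simp add: algebra_simps)
  then show "4 * b / (4 - a) \<le> 2 * b" using pos by (simp add: divide_le_eq)
qed

lemma one_minus_sqrt_one_minus_min_le:
  fixes b :: real
  assumes "0 \<le> b"
  shows "1 - sqrt (1 - min b 1) \<le> min b 1"
proof -
  define d where "d = min b 1"
  have "0 \<le> d" "d \<le> 1" using assms by (auto simp: d_def)
  then have "(1 - d)\<^sup>2 \<le> 1 - d" by (simp add: power2_eq_square mult_left_le)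
  then have "1 - d \<le> sqrt (1 - d)" using \<open>d \<le> 1\<close> by (simp add: real_le_rsqrt)
  then show ?thesis unfolding d_def by simp
qed

lemma sqrt_one_minus_min_le:
  fixes b c :: real
  assumes "0 \<le> c" "1 - c\<^sup>2 \<le> b"
  shows "sqrt (1 - min b 1) \<le> c"
proof -
  have "1 - min b 1 \<le> c\<^sup>2" using assms(2) by (auto simp: min_def)
  then show ?thesis using assms(1) by (simp add: real_sqrt_le_iff')
qed

lemma L2_norm_sq: "(L2_norm M f)\<^sup>2 = (\<integral>x. (f x)\<^sup>2 \<partial>M)"
  unfolding L2_norm_def by (simp add: integral_nonneg_AE)

lemma in_L2_divide: "in_L2 M g \<Longrightarrow> in_L2 M (\<lambda>x. g x / c)"
  unfolding in_L2_def by (auto simp: power_divide)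

lemma in_L2_sqrt:
  assumes "integrable M s"
  shows "in_L2 M (\<lambda>x. sqrt (s x))"
proof -
  have "(\<lambda>x. (sqrt (s x))\<^sup>2) = (\<lambda>x. \<bar>s x\<bar>)" by (simp add: power2_eq_square)
  then show ?thesis using assms unfolding in_L2_def by auto
qed

lemma L2_norm_sqrt:
  assumes "s \<in> borel_measurable M" "AE x in M. 0 \<le> s x"
  shows "L2_norm M (\<lambda>x. sqrt (s x)) = sqrt (\<integral>x. s x \<partial>M)"
  unfolding L2_norm_def using assms by (auto intro!: arg_cong[where f = sqrt] integral_cong_AE)

lemma in_L2_integrable_mult:
  assumes "in_L2 M f" "in_L2 M g"
  shows "integrable M (\<lambda>x. f x * g x)"
proof (rule Bochner_Integration.integrable_bound)
  show "integrable M (\<lambda>x. (f x)\<^sup>2 + (g x)\<^sup>2)" using assms by (auto simp: in_L2_def)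
  show "(\<lambda>x. f x * g x) \<in> borel_measurable M" using assms by (auto simp: in_L2_def)
  have "norm (f x * g x) \<le> norm ((f x)\<^sup>2 + (g x)\<^sup>2)" for x
  proof -
    have "2 * (\<bar>f x\<bar> * \<bar>g x\<bar>) \<le> (f x)\<^sup>2 + (g x)\<^sup>2"
      using sum_squares_bound[of "\<bar>f x\<bar>" "\<bar>g x\<bar>"] by (simp add: mult.assoc)
    moreover have "0 \<le> \<bar>f x\<bar> * \<bar>g x\<bar>" by simp
    moreover have "norm (f x * g x) = \<bar>f x\<bar> * \<bar>g x\<bar>" by (simp add: abs_mult)
    ultimately show ?thesis by simp
  qed
  then show "AE x in M. norm (f x * g x) \<le> norm ((f x)\<^sup>2 + (g x)\<^sup>2)" by simp
qed

lemma L2_norm_diff_sq: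
  assumes "in_L2 M f" "in_L2 M g"
  shows "(L2_norm M (\<lambda>x. f x - g x))\<^sup>2
           = (L2_norm M f)\<^sup>2 - 2 * (\<integral>x. f x * g x \<partial>M) + (L2_norm M g)\<^sup>2"
proof -
  have int: "integrable M (\<lambda>x. (f x)\<^sup>2)" "integrable M (\<lambda>x. (g x)\<^sup>2)"
    "integrable M (\<lambda>x. 2 * (f x * g x))"
    using assms in_L2_integrable_mult[OF assms] by (auto simp: in_L2_def)
  have "(\<lambda>x. (f x - g x)\<^sup>2) = (\<lambda>x. (f x)\<^sup>2 - 2 * (f x * g x) + (g x)\<^sup>2)"
    by (simp add: power2_diff algebra_simps)
  then show ?thesis unfolding L2_norm_sq using int by simp
qed

lemma integral_mult_nonneg_AE:
  fixes f g :: "'a \<Rightarrow> real"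
  assumes "AE x in M. 0 \<le> f x" "AE x in M. 0 \<le> g x"
  shows "0 \<le> (\<integral>x. f x * g x \<partial>M)"
  using assms by (intro integral_nonneg_AE) (auto elim: AE_mp)

lemma L2_norm_diff_normalized:
  assumes f: "in_L2 M f" "L2_norm M f = 1" and g: "in_L2 M g" "L2_norm M g > 0"
  defines "N \<equiv> L2_norm M g" and "c \<equiv> (\<integral>x. f x * g x \<partial>M) / L2_norm M g"
  shows "(L2_norm M (\<lambda>x. f x - g x / N))\<^sup>2 = 2 - 2 * c"
    and "(L2_norm M (\<lambda>x. f x - g x))\<^sup>2 = (1 - c\<^sup>2) + (N - c)\<^sup>2"
proof -
  have "(L2_norm M (\<lambda>x. g x / N))\<^sup>2 = 1"
    using g unfolding L2_norm_sq N_def by (simp add: power_divide flip: L2_norm_sq)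
  moreover have "(\<integral>x. f x * (g x / N) \<partial>M) = c"
    unfolding c_def N_def by (simp flip: divide_real_def)
  ultimately show "(L2_norm M (\<lambda>x. f x - g x / N))\<^sup>2 = 2 - 2 * c"
    using L2_norm_diff_sq[OF f(1) in_L2_divide[OF g(1)]] f(2) by simp
  have "N * c = (\<integral>x. f x * g x \<partial>M)" unfolding c_def N_def using g(2) by simp
  then show "(L2_norm M (\<lambda>x. f x - g x))\<^sup>2 = (1 - c\<^sup>2) + (N - c)\<^sup>2"
    using L2_norm_diff_sq[OF f(1) g(1)] f(2) unfolding N_def by (simp add: power2_diff)
qed

lemma L2_norm_diff_normalized_le:
  assumes "in_L2 M f" "in_L2 M g" "AE x in M. 0 \<le> f x" "AE x in M. 0 \<le> g x"
    "L2_norm M f = 1" "L2_norm M g > 0"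
  defines "a \<equiv> (L2_norm M (\<lambda>x. f x - g x / L2_norm M g))\<^sup>2"
    and "b \<equiv> (L2_norm M (\<lambda>x. f x - g x))\<^sup>2"
  shows "a \<le> 4 * b / (4 - a)" and "4 * b / (4 - a) \<le> 2 * b"
proof -
  define c where "c = (\<integral>x. f x * g x \<partial>M) / L2_norm M g"
  have a: "a = 2 - 2 * c" and b: "b = (1 - c\<^sup>2) + (L2_norm M g - c)\<^sup>2"
    using L2_norm_diff_normalized[OF assms(1,5,2,6)] unfolding a_def b_def c_def by auto
  have "0 \<le> c"
    unfolding c_def using integral_mult_nonneg_AE[OF assms(3,4)] assms(6) by simp
  moreover have "a * (4 - a) = 4 * (1 - c\<^sup>2)"
    unfolding a by (simp add: algebra_simps power2_eq_square)
  ultimately have "a \<le> 2" "a * (4 - a) \<le> 4 * b" unfolding a b by auto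
  moreover have "0 \<le> a" unfolding a_def by simp
  ultimately show "a \<le> 4 * b / (4 - a)" and "4 * b / (4 - a) \<le> 2 * b"
    using le_four_mult_divide_le_two_mult by auto
qed

lemma prob_density_normalized_square:
  assumes "in_L2 M g" "L2_norm M g > 0"
  shows "prob_density M (\<lambda>x. (g x / L2_norm M g)\<^sup>2)"
  using assms L2_norm_sq[of M g] unfolding prob_density_def in_L2_def
  by (auto simp: power_divide)

lemma hellinger2_square:
  assumes "s \<in> borel_measurable M" "h \<in> borel_measurable M" "AE x in M. 0 \<le> h x"
  shows "hellinger2 M s (\<lambda>x. (h x)\<^sup>2) = (L2_norm M (\<lambda>x. sqrt (s x) - h x))\<^sup>2 / 2"
  unfolding hellinger2_def L2_norm_sq using assms by (auto intro: integral_cong_AE)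

lemma hellinger2_normalized_square_le:
  assumes s: "prob_density M s"
    and g: "in_L2 M g" "AE x in M. 0 \<le> g x" "L2_norm M g > 0"
  shows "hellinger2 M s (\<lambda>x. (g x / L2_norm M g)\<^sup>2)
           \<le> 1 - sqrt (1 - min ((L2_norm M (\<lambda>x. sqrt (s x) - g x))\<^sup>2) 1)"
proof -
  define c where "c = (\<integral>x. sqrt (s x) * g x \<partial>M) / L2_norm M g"
  have s_meas[measurable]: "s \<in> borel_measurable M" and [measurable]: "g \<in> borel_measurable M"
    using s g(1) by (auto simp: prob_density_def in_L2_def)
  have s0: "AE x in M. 0 \<le> s x" and s_int: "integrable M s" and s1: "(\<integral>x. s x \<partial>M) = 1"
    using s by (auto simp: prob_density_def)
  have f: "in_L2 M (\<lambda>x. sqrt (s x))" "L2_norm M (\<lambda>x. sqrt (s x)) = 1"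
    using in_L2_sqrt[OF s_int] L2_norm_sqrt[OF s_meas s0] s1 by auto
  note dist = L2_norm_diff_normalized[OF f g(1,3), folded c_def]
  have "hellinger2 M s (\<lambda>x. (g x / L2_norm M g)\<^sup>2)
          = (L2_norm M (\<lambda>x. sqrt (s x) - g x / L2_norm M g))\<^sup>2 / 2"
    by (rule hellinger2_square) (use g(2,3) in auto)
  then have "hellinger2 M s (\<lambda>x. (g x / L2_norm M g)\<^sup>2) = 1 - c" using dist(1) by simp
  moreover have "sqrt (1 - min ((L2_norm M (\<lambda>x. sqrt (s x) - g x))\<^sup>2) 1) \<le> c"
  proof (rule sqrt_one_minus_min_le)
    show "0 \<le> c"
      unfolding c_def using integral_mult_nonneg_AE[OF _ g(2)] s0 g(3) by auto
    show "1 - c\<^sup>2 \<le> (L2_norm M (\<lambda>x. sqrt (s x) - g x))\<^sup>2" unfolding dist(2) by simp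
  qed
  ultimately show ?thesis by simp
qed

lemma hellinger2_positive_part_normalized_le:
  assumes s: "prob_density M s" and t: "integrable M t" "(\<integral>x. max (t x) 0 \<partial>M) > 0"
  shows "hellinger2 M s (\<lambda>x. max (t x) 0 / (\<integral>y. max (t y) 0 \<partial>M))
           \<le> 1 - sqrt (1 - min ((L2_norm M (\<lambda>x. sqrt (s x) - sqrt (max (t x) 0)))\<^sup>2) 1)"
proof -
  have [measurable]: "t \<in> borel_measurable M" using t(1) by simp
  have norm: "L2_norm M (\<lambda>x. sqrt (max (t x) 0)) = sqrt (\<integral>x. max (t x) 0 \<partial>M)"
    by (rule L2_norm_sqrt) auto
  have "(\<lambda>x. (sqrt (max (t x) 0) / L2_norm M (\<lambda>x. sqrt (max (t x) 0)))\<^sup>2)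
      = (\<lambda>x. max (t x) 0 / (\<integral>y. max (t y) 0 \<partial>M))"
    unfolding norm using t(2) by (auto simp: power_divide)
  moreover have "in_L2 M (\<lambda>x. sqrt (max (t x) 0))" using t(1) by (simp add: in_L2_sqrt)
  ultimately show ?thesis
    using hellinger2_normalized_square_le[OF s, of "\<lambda>x. sqrt (max (t x) 0)"] t(2) norm by simp
qed

theorem lemma1:
  fixes M :: "'a measure"
  shows
  "(\<forall>f g. in_L2 M f \<and> in_L2 M g \<and> (AE x in M. 0 \<le> f x) \<and> (AE x in M. 0 \<le> g x)
        \<and> L2_norm M f = 1 \<and> L2_norm M g > 0 \<longrightarrow>
       (let gb = (\<lambda>x. g x / L2_norm M g) in
         (L2_norm M (\<lambda>x. f x - gb x))\<^sup>2
           \<le> 4 * (L2_norm M (\<lambda>x. f x - g x))\<^sup>2 / (4 - (L2_norm M (\<lambda>x. f x - gb x))\<^sup>2)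
         \<and> 4 * (L2_norm M (\<lambda>x. f x - g x))\<^sup>2 / (4 - (L2_norm M (\<lambda>x. f x - gb x))\<^sup>2)
           \<le> 2 * (L2_norm M (\<lambda>x. f x - g x))\<^sup>2))
   \<and>
   (\<forall>s g. prob_density M s \<and> in_L2 M g \<and> (AE x in M. 0 \<le> g x) \<and> L2_norm M g > 0 \<longrightarrow>
       (let u = (\<lambda>x. (g x / L2_norm M g)\<^sup>2);
            d = min ((L2_norm M (\<lambda>x. sqrt (s x) - g x))\<^sup>2) 1 in
         prob_density M u
         \<and> hellinger2 M s u \<le> 1 - sqrt (1 - d)
         \<and> 1 - sqrt (1 - d) \<le> d))
   \<and>
   (\<forall>s t. prob_density M s \<and> integrable M t \<and> (\<integral>x. max (t x) 0 \<partial>M) > 0 \<longrightarrow>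
       (let p = (\<lambda>x. max (t x) 0 / (\<integral>y. max (t y) 0 \<partial>M));
            d = min ((L2_norm M (\<lambda>x. sqrt (s x) - sqrt (max (t x) 0)))\<^sup>2) 1 in
         hellinger2 M s p \<le> 1 - sqrt (1 - d)
         \<and> 1 - sqrt (1 - d) \<le> d))"
proof (intro conjI allI impI, goal_cases)
  case (1 f g)
  then show ?case using L2_norm_diff_normalized_le[of M f g] by (simp add: Let_def)
next
  case (2 s g)
  then show ?case
    using prob_density_normalized_square hellinger2_normalized_square_le[of M s g]
      one_minus_sqrt_one_minus_min_le[OF zero_le_power2]
    unfolding Let_def by blast
next
  case (3 s t)
  then show ?case
    using hellinger2_positive_part_normalized_le[of M s t]
      one_minus_sqrt_one_minus_min_le[OF zero_le_power2]
    unfolding Let_def by blast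
qed

end
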